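(* Let $S=(s_1,\dots,s_m)\in[n]^m$ and let $P=([a_1,b_1],\dots,[a_k,b_k])$ be a partition of $[n]$ into $k$ consecutive intervals, so $a_1=1$, $b_k=n$ and $a_{i+1}=b_i+1$. For each $i$, let $S_i$ be the sequence obtained by going through $S$ in order and, for each $s_j\in[a_i,b_i]$, appending $s_j-a_i+1$; thus $S_i$ is a sequence over $[b_i-a_i+1]$. Let $\tilde S=(\tilde s_1,\dots,\tilde s_m)\in[k]^m$ with $\tilde s_j=i$ iff $s_j\in[a_i,b_i]$. Then $\mathrm{OPT}(S)\le\sum_{i=1}^k\mathrm{OPT}(S_i)+3\,\mathrm{OPT}(\tilde S)$.
   Context: Dynamic BST model: for a sequence over key set $[N]$, an algorithm first chooses an initial BST on $[N]$. To serve access $s_t$ it touches a set of nodes forming a connected subtree containing the root and $s_t$, may rearrange the touched nodes into any BST shape (untouched subtrees reattached in the unique valid way), and pays the number of touched nodes. $\mathrm{OPT}$ of a sequence is the minimum total cost over all offline algorithms on its key set. *)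

theory Defs
  imports Main "HOL-Library.Tree"
begin

text \<open>Dynamic BST model. A BST on key set [N] is a tree t with inorder t = [1..<N+1].
  Nodes are identified with their keys.\<close>

fun path_to :: "nat tree \<Rightarrow> nat \<Rightarrow> nat list" where
  "path_to Leaf v = []"
| "path_to (Node l x r) v =
     x # (if v = x then [] else if v < x then path_to l v else path_to r v)"

fun subtree_at :: "nat tree \<Rightarrow> nat \<Rightarrow> nat tree" where
  "subtree_at Leaf v = Leaf"
| "subtree_at (Node l x r) v =
     (if v = x then Node l x r else if v < x then subtree_at l v else subtree_at r v)"

text \<open>One access step: serving access s in tree T by touching the node set X
  (a connected subtree containing the root and s) and rearranging it, producing T'.
  The touched nodes may be rearranged into any BST shape; untouched nodes keep their
  subtrees (i.e. untouched subtrees are reattached unchanged).\<close>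
definition bst_step :: "nat tree \<Rightarrow> nat \<Rightarrow> nat set \<Rightarrow> nat tree \<Rightarrow> bool" where
  "bst_step T s X T' \<longleftrightarrow>
     X \<subseteq> set_tree T \<and> s \<in> X \<and> (\<forall>v\<in>X. set (path_to T v) \<subseteq> X) \<and>
     inorder T' = inorder T \<and>
     (\<forall>v \<in> set_tree T - X. subtree_at T' v = subtree_at T v)"

definition bst_exec :: "nat \<Rightarrow> nat list \<Rightarrow> nat tree list \<Rightarrow> nat set list \<Rightarrow> bool" where
  "bst_exec N S Ts Xs \<longleftrightarrow>
     length Ts = length S + 1 \<and> length Xs = length S \<and>
     inorder (Ts ! 0) = [1..<N+1] \<and>
     (\<forall>j < length S. bst_step (Ts ! j) (S ! j) (Xs ! j) (Ts ! Suc j))"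

definition OPT :: "nat \<Rightarrow> nat list \<Rightarrow> nat" where
  "OPT N S = Inf {sum_list (map card Xs) | Ts Xs. bst_exec N S Ts Xs}"

end

theory Submission
  imports Defs
begin

text \<open>Serve the access sequence over block indices optimally with a top tree T on [k], and each
  block's subsequence optimally with a tree B j on its keys [a j, b j]. Combine them into one BST
  on [n]: every top node j becomes the node a j, whose right child is b j, and between them hangs
  B j with a j and b j spliced out. An access to s in block j is simulated by touching a i and b i
  for every node i touched in the top tree, together with the nodes touched in B j. This is a
  connected subtree containing the root, and after rearranging it as both algorithms do, the
  combined tree is again of the same shape. So the cost of each access is at most twice the
  top-level cost plus the block cost, which gives the bound even with factor 2 instead of 3.\<close>

section \<open>Search paths and subtrees\<close>

lemma set_path_to_subset: "set (path_to t v) \<subseteq> set_tree t"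
  by (induction t) auto

lemma set_subtree_at_subset: "set_tree (subtree_at t v) \<subseteq> set_tree t"
  by (induction t) auto

lemma subtree_at_bst: "bst t \<Longrightarrow> v \<in> set_tree t \<Longrightarrow> \<exists>l r. subtree_at t v = Node l v r"
  by (induction t) auto

lemma in_path_to_if_in_subtree_at:
  "bst t \<Longrightarrow> x \<in> set_tree (subtree_at t v) \<Longrightarrow> v \<in> set (path_to t x)"
proof (induction t)
  case (Node l y r)
  then show ?case
    using set_subtree_at_subset[of l v] set_subtree_at_subset[of r v]
    by (fastforce split: if_splits)
qed simp

section \<open>Splicing out a node\<close>

text \<open>Deletes m by replacing it with one of its subtrees: correct only if the other one is empty,
  i.e. if unary_at m t.\<close>
fun splice :: "nat \<Rightarrow> nat tree \<Rightarrow> nat tree" where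
  "splice m Leaf = Leaf"
| "splice m (Node l x r) =
     (if m = x then (if l = Leaf then r else l)
      else if m < x then Node (splice m l) x r else Node l x (splice m r))"

definition unary_at :: "nat \<Rightarrow> nat tree \<Rightarrow> bool" where
  "unary_at m t \<longleftrightarrow> (\<forall>l x r. subtree_at t m = Node l x r \<longrightarrow> l = Leaf \<or> r = Leaf)"

lemma unary_at_Node:
  "unary_at m (Node l x r) \<longleftrightarrow>
     (if m = x then l = Leaf \<or> r = Leaf else if m < x then unary_at m l else unary_at m r)"
  by (simp add: unary_at_def)

lemma unary_at_Leaf: "unary_at m Leaf"
  by (simp add: unary_at_def)

lemma unary_at_min: "bst t \<Longrightarrow> \<forall>x\<in>set_tree t. m \<le> x \<Longrightarrow> unary_at m t"
proof (induction t)
  case (Node l x r)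
  then show ?case
    by (cases l) (auto simp: unary_at_Node unary_at_Leaf)
qed (rule unary_at_Leaf)

lemma unary_at_max: "bst t \<Longrightarrow> \<forall>x\<in>set_tree t. x \<le> m \<Longrightarrow> unary_at m t"
proof (induction t)
  case (Node l x r)
  then show ?case
    by (cases r) (auto simp: unary_at_Node unary_at_Leaf)
qed (rule unary_at_Leaf)

lemma splice_absent: "m \<notin> set_tree t \<Longrightarrow> splice m t = t"
  by (induction t) auto

lemma inorder_splice:
  "bst t \<Longrightarrow> unary_at m t \<Longrightarrow> inorder (splice m t) = filter (\<lambda>x. x \<noteq> m) (inorder t)"
proof (induction t)
  case (Node l x r)
  have "filter (\<lambda>z. z \<noteq> m) (inorder l) = inorder l" if "x \<le> m"
    using Node.prems(1) that by (fastforce intro: filter_True)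
  moreover have "filter (\<lambda>z. z \<noteq> m) (inorder r) = inorder r" if "m \<le> x"
    using Node.prems(1) that by (fastforce intro: filter_True)
  ultimately show ?case
    using Node by (auto simp: unary_at_Node)
qed simp

lemma set_path_to_splice_subset:
  "bst t \<Longrightarrow> unary_at m t \<Longrightarrow> v \<in> set_tree t \<Longrightarrow> v \<noteq> m \<Longrightarrow>
   set (path_to (splice m t) v) \<subseteq> set (path_to t v)"
proof (induction t)
  case (Node l x r)
  then show ?case
    by (cases l) (auto simp: unary_at_Node)
qed simp

lemma subtree_at_splice:
  "bst t \<Longrightarrow> unary_at m t \<Longrightarrow> v \<in> set_tree t \<Longrightarrow> v \<noteq> m \<Longrightarrow>
   subtree_at (splice m t) v = splice m (subtree_at t v)"
proof (induction t)
  case (Node l x r)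
  have "splice m (subtree_at l v) = subtree_at l v" if "x \<le> m"
    using Node.prems(1) that set_subtree_at_subset by (fastforce intro: splice_absent)
  moreover have "splice m (subtree_at r v) = subtree_at r v" if "m \<le> x"
    using Node.prems(1) that set_subtree_at_subset by (fastforce intro: splice_absent)
  ultimately show ?case
    using Node by (cases l) (auto simp: unary_at_Node)
qed simp

definition trim :: "nat \<Rightarrow> nat \<Rightarrow> nat tree \<Rightarrow> nat tree" where
  "trim lo hi t = splice hi (splice lo t)"

lemma bst_if_inorder_upt: "inorder t = [lo..<hi] \<Longrightarrow> bst t"
  by (simp add: bst_iff_sorted_wrt_less)

lemma set_tree_if_inorder_upt: "inorder t = [lo..<hi] \<Longrightarrow> set_tree t = {lo..<hi}"
  by (metis set_inorder set_upt)

context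
  fixes lo hi :: nat and t :: "nat tree"
  assumes inorder_t: "inorder t = [lo..<Suc hi]" and lo_le_hi: "lo \<le> hi"
begin

private lemma bst_t: "bst t"
  using inorder_t by (rule bst_if_inorder_upt)

private lemma unary_at_lo: "unary_at lo t"
  using unary_at_min[OF bst_t] set_tree_if_inorder_upt[OF inorder_t] by simp

private lemma inorder_splice_lo: "inorder (splice lo t) = [Suc lo..<Suc hi]"
proof -
  have "filter (\<lambda>x. x \<noteq> lo) [lo..<Suc hi] = [Suc lo..<Suc hi]"
    using lo_le_hi by (simp add: upt_conv_Cons filter_id_conv del: upt_Suc)
  then show ?thesis
    using inorder_splice[OF bst_t unary_at_lo] inorder_t by simp
qed

private lemma bst_splice_lo: "bst (splice lo t)"
  using inorder_splice_lo by (rule bst_if_inorder_upt)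

private lemma unary_at_hi: "unary_at hi (splice lo t)"
  using unary_at_max[OF bst_splice_lo] set_tree_if_inorder_upt[OF inorder_splice_lo] by simp

lemma inorder_trim: "inorder (trim lo hi t) = [Suc lo..<hi]"
proof -
  have "filter (\<lambda>x. x \<noteq> hi) [Suc lo..<Suc hi] = [Suc lo..<hi]"
    using lo_le_hi by (cases "lo = hi") (auto simp: filter_id_conv)
  then show ?thesis
    using inorder_splice[OF bst_splice_lo unary_at_hi] inorder_splice_lo by (simp add: trim_def)
qed

lemma set_path_to_trim_subset:
  "lo < v \<Longrightarrow> v < hi \<Longrightarrow> set (path_to (trim lo hi t) v) \<subseteq> set (path_to t v)"
  using set_path_to_splice_subset[OF bst_splice_lo unary_at_hi, of v]
    set_path_to_splice_subset[OF bst_t unary_at_lo, of v]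
    set_tree_if_inorder_upt[OF inorder_t] set_tree_if_inorder_upt[OF inorder_splice_lo]
  by (force simp: trim_def)

lemma subtree_at_trim:
  "lo < v \<Longrightarrow> v < hi \<Longrightarrow> subtree_at (trim lo hi t) v = trim lo hi (subtree_at t v)"
  using subtree_at_splice[OF bst_splice_lo unary_at_hi, of v] subtree_at_splice[OF bst_t unary_at_lo, of v]
    set_tree_if_inorder_upt[OF inorder_t] set_tree_if_inorder_upt[OF inorder_splice_lo]
  by (simp add: trim_def)

end

section \<open>Expanding a tree of blocks\<close>

fun expand :: "(nat \<Rightarrow> nat) \<Rightarrow> (nat \<Rightarrow> nat) \<Rightarrow> (nat \<Rightarrow> nat tree) \<Rightarrow> nat tree \<Rightarrow> nat tree" where
  "expand a b P Leaf = Leaf"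
| "expand a b P (Node l j r) = Node (expand a b P l) (a j)
     (if a j = b j then expand a b P r else Node (P j) (b j) (expand a b P r))"

definition separated :: "(nat \<Rightarrow> nat) \<Rightarrow> (nat \<Rightarrow> nat) \<Rightarrow> nat set \<Rightarrow> bool" where
  "separated a b A \<longleftrightarrow> (\<forall>j\<in>A. a j \<le> b j) \<and> (\<forall>j\<in>A. \<forall>j'\<in>A. j < j' \<longrightarrow> b j < a j')"

lemma separated_Node:
  "separated a b (set_tree (Node l j r)) \<Longrightarrow>
   a j \<le> b j \<and> separated a b (set_tree l) \<and> separated a b (set_tree r)"
  by (auto simp: separated_def)

lemma inorder_expand:
  "\<forall>j\<in>set_tree T. inorder (P j) = [Suc (a j)..<b j] \<Longrightarrow> separated a b (set_tree T) \<Longrightarrow>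
   inorder (expand a b P T) = concat (map (\<lambda>j. [a j..<Suc (b j)]) (inorder T))"
proof (induction T)
  case (Node l j r)
  then have "a j \<le> b j"
    by (simp add: separated_def)
  then have "[a j..<Suc (b j)] = a j # (if a j = b j then [] else [Suc (a j)..<b j] @ [b j])"
    by (cases "a j = b j") (simp_all add: upt_conv_Cons)
  with Node show ?case
    using separated_Node[OF Node.prems(2)] by auto
qed simp

lemma set_tree_expand:
  "\<forall>j\<in>set_tree T. inorder (P j) = [Suc (a j)..<b j] \<Longrightarrow> separated a b (set_tree T) \<Longrightarrow>
   set_tree (expand a b P T) = (\<Union>j\<in>set_tree T. {a j..b j})"
  by (simp flip: set_inorder add: inorder_expand atLeastLessThanSuc_atLeastAtMost del: upt_Suc)

lemma expand_cong: "(\<And>j. j \<in> set_tree T \<Longrightarrow> P j = P' j) \<Longrightarrow> expand a b P T = expand a b P' T"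
  by (induction T) auto

lemma set_path_to_expand_subset:
  "bst T \<Longrightarrow> separated a b (set_tree T) \<Longrightarrow> j \<in> set_tree T \<Longrightarrow> a j \<le> v \<Longrightarrow> v \<le> b j \<Longrightarrow>
   set (path_to (expand a b P T) v) \<subseteq> a ` set (path_to T j) \<union> b ` set (path_to T j) \<union>
     (if a j < v \<and> v < b j then set (path_to (P j) v) else {})"
proof (induction T)
  case (Node l x r)
  have "b j < a x" if "j < x"
    using Node.prems(2,3) that by (auto simp: separated_def)
  moreover have "b x < a j" if "x < j"
    using Node.prems(2,3) that by (auto simp: separated_def)
  ultimately show ?case
    using Node separated_Node[OF Node.prems(2)] by (auto split: if_splits)
qed simp

lemma subtree_at_expand:
  "bst T \<Longrightarrow> separated a b (set_tree T) \<Longrightarrow> j \<in> set_tree T \<Longrightarrow> a j \<le> v \<Longrightarrow> v \<le> b j \<Longrightarrow>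
   subtree_at (expand a b P T) v = subtree_at (expand a b P (subtree_at T j)) v"
proof (induction T)
  case (Node l x r)
  have "b j < a x" if "j < x"
    using Node.prems(2,3) that by (auto simp: separated_def)
  moreover have "b x < a j" if "x < j"
    using Node.prems(2,3) that by (auto simp: separated_def)
  ultimately show ?case
    using Node separated_Node[OF Node.prems(2)] by (auto split: if_splits)
qed simp

lemma subtree_at_expand_inner:
  assumes "bst T" "separated a b (set_tree T)" "j \<in> set_tree T" "a j < v" "v < b j"
  shows "subtree_at (expand a b P T) v = subtree_at (P j) v"
proof -
  obtain l r where "subtree_at T j = Node l j r"
    using subtree_at_bst[OF assms(1,3)] by blast
  with assms show ?thesis
    using subtree_at_expand[OF assms(1-3), of v P] by simp
qed

section \<open>Runs and OPT\<close>

lemma bst_stepD: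
  assumes "bst_step T s X T'"
  shows "X \<subseteq> set_tree T" "s \<in> X" "v \<in> X \<Longrightarrow> set (path_to T v) \<subseteq> X"
    "inorder T' = inorder T" "v \<in> set_tree T \<Longrightarrow> v \<notin> X \<Longrightarrow> subtree_at T' v = subtree_at T v"
  using assms unfolding bst_step_def by blast+

inductive bst_run :: "nat tree \<Rightarrow> nat list \<Rightarrow> nat \<Rightarrow> bool" where
  bst_run_Nil: "bst_run T [] 0"
| bst_run_Cons: "bst_step T s X T' \<Longrightarrow> bst_run T' S c \<Longrightarrow> bst_run T (s # S) (card X + c)"

inductive_cases bst_run_NilE: "bst_run T [] c"
inductive_cases bst_run_ConsE: "bst_run T (s # S) c"

lemma bst_run_if_steps:
  "length Ts = length S + 1 \<Longrightarrow> length Xs = length S \<Longrightarrow>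
   \<forall>j < length S. bst_step (Ts ! j) (S ! j) (Xs ! j) (Ts ! Suc j) \<Longrightarrow>
   bst_run (Ts ! 0) S (sum_list (map card Xs))"
proof (induction S arbitrary: Ts Xs)
  case Nil
  then show ?case by (simp add: bst_run_Nil)
next
  case (Cons s S)
  then obtain T T' Ts' X Xs' where lists: "Ts = T # T' # Ts'" "Xs = X # Xs'"
    by (metis Suc_eq_plus1 Suc_length_conv length_Cons)
  have "\<forall>j < length S. bst_step ((T' # Ts') ! j) (S ! j) (Xs' ! j) ((T' # Ts') ! Suc j)"
    using Cons.prems(3) lists by (metis Suc_less_eq length_Cons nth_Cons_Suc)
  then have "bst_run T' S (sum_list (map card Xs'))"
    using Cons.IH[of "T' # Ts'" Xs'] Cons.prems(1,2) lists by simp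
  moreover have "bst_step T s X T'"
    using Cons.prems(3) lists by fastforce
  ultimately show ?case
    using lists bst_run_Cons by fastforce
qed

lemma steps_if_bst_run:
  "bst_run T S c \<Longrightarrow>
   \<exists>Ts Xs. length Ts = length S + 1 \<and> length Xs = length S \<and> Ts ! 0 = T \<and>
     (\<forall>j < length S. bst_step (Ts ! j) (S ! j) (Xs ! j) (Ts ! Suc j)) \<and>
     sum_list (map card Xs) = c"
proof (induction rule: bst_run.induct)
  case (bst_run_Nil T)
  show ?case
    by (intro exI[of _ "[T]"] exI[of _ "[]"]) simp
next
  case (bst_run_Cons T s X T' S c)
  then obtain Ts Xs where "length Ts = length S + 1" "length Xs = length S" "Ts ! 0 = T'"
    "\<forall>j < length S. bst_step (Ts ! j) (S ! j) (Xs ! j) (Ts ! Suc j)" "sum_list (map card Xs) = c"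
    by blast
  with bst_run_Cons.hyps(1) show ?case
    by (intro exI[of _ "T # Ts"] exI[of _ "X # Xs"]) (auto simp: nth_Cons split: nat.split)
qed

lemma OPT_eq_Inf_bst_run: "OPT N S = Inf {c. \<exists>T. inorder T = [1..<N+1] \<and> bst_run T S c}"
proof -
  have "{sum_list (map card Xs) | Ts Xs. bst_exec N S Ts Xs} =
        {c. \<exists>T. inorder T = [1..<N+1] \<and> bst_run T S c}"
    unfolding bst_exec_def by (fastforce dest: steps_if_bst_run intro: bst_run_if_steps)
  then show ?thesis
    by (simp add: OPT_def)
qed

lemma OPT_le_bst_run: "inorder T = [1..<N+1] \<Longrightarrow> bst_run T S c \<Longrightarrow> OPT N S \<le> c"
  unfolding OPT_eq_Inf_bst_run by (blast intro: cInf_lower)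

lemma bst_run_exists: "set S \<subseteq> set_tree T \<Longrightarrow> \<exists>c. bst_run T S c"
proof (induction S)
  case (Cons s S)
  have "bst_step T s (set_tree T) T"
    unfolding bst_step_def using Cons.prems set_path_to_subset by auto
  with Cons show ?case
    using bst_run_Cons by fastforce
qed (auto intro: bst_run_Nil)

fun right_spine :: "nat list \<Rightarrow> nat tree" where
  "right_spine [] = Leaf"
| "right_spine (x # xs) = Node Leaf x (right_spine xs)"

lemma inorder_right_spine: "inorder (right_spine xs) = xs"
  by (induction xs) auto

lemma OPT_attained:
  assumes "\<forall>s\<in>set S. 1 \<le> s \<and> s \<le> N"
  shows "\<exists>T. inorder T = [1..<N+1] \<and> bst_run T S (OPT N S)"
proof -
  let ?T = "right_spine [1..<N+1]"
  have "set S \<subseteq> set_tree ?T"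
    using assms by (auto simp flip: set_inorder simp: inorder_right_spine)
  then obtain c where "bst_run ?T S c"
    using bst_run_exists by blast
  then have "{c. \<exists>T. inorder T = [1..<N+1] \<and> bst_run T S c} \<noteq> {}"
    using inorder_right_spine by blast
  from Inf_nat_def1[OF this] show ?thesis
    unfolding OPT_eq_Inf_bst_run by blast
qed

lemma path_to_shift: "path_to (map_tree (\<lambda>x. x + c) t) (v + c) = map (\<lambda>x. x + c) (path_to t v)"
  by (induction t) auto

lemma subtree_at_shift:
  "subtree_at (map_tree (\<lambda>x. x + c) t) (v + c) = map_tree (\<lambda>x. x + c) (subtree_at t v)"
  by (induction t) auto

lemma bst_step_shift:
  assumes "bst_step T s X T'"
  shows "bst_step (map_tree (\<lambda>x. x + c) T) (s + c) ((\<lambda>x. x + c) ` X) (map_tree (\<lambda>x. x + c) T')"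
  using assms unfolding bst_step_def
  by (auto simp: tree.set_map inorder_map path_to_shift subtree_at_shift image_iff)

lemma bst_run_shift: "bst_run T S c \<Longrightarrow> bst_run (map_tree (\<lambda>x. x + d) T) (map (\<lambda>x. x + d) S) c"
proof (induction rule: bst_run.induct)
  case (bst_run_Cons T s X T' S c)
  have "card ((\<lambda>x. x + d) ` X) = card X"
    by (simp add: card_image)
  with bst_run_Cons show ?case
    using bst_run.bst_run_Cons[OF bst_step_shift[OF bst_run_Cons.hyps(1)]] by fastforce
qed (simp add: bst_run_Nil)

lemma map_add_upt_shift: "map (\<lambda>x. x + d) [i..<j] = [i + d..<j + d]"
  by (induction j) auto

lemma OPT_attained_shift:
  assumes "\<forall>s\<in>set S. d < s \<and> s \<le> d + N"
  shows "\<exists>T. inorder T = [Suc d..<Suc (d + N)] \<and> bst_run T S (OPT N (map (\<lambda>s. s - d) S))"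
proof -
  obtain T where T: "inorder T = [1..<N+1]" "bst_run T (map (\<lambda>s. s - d) S) (OPT N (map (\<lambda>s. s - d) S))"
    using OPT_attained[of "map (\<lambda>s. s - d) S" N] assms by fastforce
  have "map (\<lambda>x. x + d) (map (\<lambda>s. s - d) S) = S"
    using assms by (induction S) auto
  moreover have "inorder (map_tree (\<lambda>x. x + d) T) = [Suc d..<Suc (d + N)]"
    using T(1) by (simp add: inorder_map map_add_upt_shift add.commute del: upt_Suc)
  ultimately show ?thesis
    using bst_run_shift[OF T(2), of d] by auto
qed

section \<open>Simulating the top tree and the block trees together\<close>

definition combine :: "(nat \<Rightarrow> nat) \<Rightarrow> (nat \<Rightarrow> nat) \<Rightarrow> (nat \<Rightarrow> nat tree) \<Rightarrow> nat tree \<Rightarrow> nat tree" where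
  "combine a b B T = expand a b (\<lambda>j. trim (a j) (b j) (B j)) T"

lemma inorder_trim_blocks:
  "\<forall>j\<in>A. inorder (B j) = [a j..<Suc (b j)] \<Longrightarrow> separated a b A \<Longrightarrow>
   \<forall>j\<in>A. inorder (trim (a j) (b j) (B j)) = [Suc (a j)..<b j]"
  unfolding separated_def by (blast intro: inorder_trim)

lemma inorder_combine:
  assumes "\<forall>j\<in>set_tree T. inorder (B j) = [a j..<Suc (b j)]" "separated a b (set_tree T)"
  shows "inorder (combine a b B T) = concat (map (\<lambda>j. [a j..<Suc (b j)]) (inorder T))"
  unfolding combine_def using inorder_trim_blocks[OF assms] assms(2) by (rule inorder_expand)

lemma set_tree_combine:
  assumes "\<forall>j\<in>set_tree T. inorder (B j) = [a j..<Suc (b j)]" "separated a b (set_tree T)"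
  shows "set_tree (combine a b B T) = (\<Union>j\<in>set_tree T. {a j..b j})"
  unfolding combine_def using inorder_trim_blocks[OF assms] assms(2) by (rule set_tree_expand)

context
  fixes a b :: "nat \<Rightarrow> nat" and B :: "nat \<Rightarrow> nat tree" and T T' B' :: "nat tree"
    and i s :: nat and X Y :: "nat set"
  assumes top_step: "bst_step T i X T'"
    and bst_T: "bst T"
    and separated_T: "separated a b (set_tree T)"
    and inorder_B: "\<forall>j\<in>set_tree T. inorder (B j) = [a j..<Suc (b j)]"
    and block_step: "bst_step (B i) s Y B'"
begin

private lemma i_in_T: "i \<in> set_tree T"
  using top_step unfolding bst_step_def by blast

private lemma set_tree_T': "set_tree T' = set_tree T"
  using top_step unfolding bst_step_def by (metis set_inorder)

private lemma bst_T': "bst T'"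
  using top_step bst_T unfolding bst_step_def by (simp add: bst_iff_sorted_wrt_less)

private lemma separated_T': "separated a b (set_tree T')"
  using separated_T set_tree_T' by simp

private lemma inorder_B': "\<forall>j\<in>set_tree T'. inorder ((B(i := B')) j) = [a j..<Suc (b j)]"
  using inorder_B block_step i_in_T set_tree_T' unfolding bst_step_def by auto

private lemma inorder_B_i: "inorder (B i) = [a i..<Suc (b i)]"
  using inorder_B i_in_T by blast

private lemma inorder_B'_i: "inorder B' = [a i..<Suc (b i)]"
  using bst_stepD(4)[OF block_step] inorder_B_i by simp

private lemma Y_subset: "Y \<subseteq> {a i..b i}"
  using bst_stepD(1)[OF block_step] set_tree_if_inorder_upt[OF inorder_B_i]
  by (simp add: atLeastLessThanSuc_atLeastAtMost)

lemma combine_touched_subset: "a ` X \<union> b ` X \<union> Y \<subseteq> set_tree (combine a b B T)"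
proof -
  have "Y \<subseteq> {a i..b i}"
    by (rule Y_subset)
  moreover have "a ` X \<union> b ` X \<subseteq> (\<Union>j\<in>set_tree T. {a j..b j})"
    using bst_stepD(1)[OF top_step] separated_T unfolding separated_def by fastforce
  ultimately show ?thesis
    using set_tree_combine[OF inorder_B separated_T] i_in_T by blast
qed

lemma set_path_to_combine_touched:
  assumes "v \<in> a ` X \<union> b ` X \<union> Y"
  shows "set (path_to (combine a b B T) v) \<subseteq> a ` X \<union> b ` X \<union> Y"
proof -
  have top_paths: "a ` set (path_to T j) \<union> b ` set (path_to T j) \<subseteq> a ` X \<union> b ` X" if "j \<in> X" for j
    using bst_stepD(3)[OF top_step that] by blast
  from assms consider j where "j \<in> X" "v = a j \<or> v = b j" | "v \<in> Y"
    by blast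
  then show ?thesis
  proof cases
    case 1
    then have j: "j \<in> set_tree T"
      using bst_stepD(1)[OF top_step] by blast
    then have "a j \<le> b j"
      using separated_T unfolding separated_def by blast
    with 1 have v_range: "a j \<le> v" "v \<le> b j" and endpoint: "\<not> (a j < v \<and> v < b j)"
      by auto
    have "set (path_to (combine a b B T) v) \<subseteq> a ` set (path_to T j) \<union> b ` set (path_to T j) \<union>
        (if a j < v \<and> v < b j then set (path_to (trim (a j) (b j) (B j)) v) else {})"
      unfolding combine_def by (rule set_path_to_expand_subset[OF bst_T separated_T j v_range])
    then have "set (path_to (combine a b B T) v) \<subseteq> a ` set (path_to T j) \<union> b ` set (path_to T j)"
      by (simp only: if_not_P[OF endpoint] Un_empty_right)
    with top_paths[OF \<open>j \<in> X\<close>] show ?thesis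
      by (meson le_supI1 order_trans)
  next
    case 2
    then have v_range: "a i \<le> v" "v \<le> b i"
      using Y_subset by auto
    have "set (path_to (combine a b B T) v) \<subseteq> a ` set (path_to T i) \<union> b ` set (path_to T i) \<union>
        (if a i < v \<and> v < b i then set (path_to (trim (a i) (b i) (B i)) v) else {})"
      unfolding combine_def by (rule set_path_to_expand_subset[OF bst_T separated_T i_in_T v_range])
    moreover have "(if a i < v \<and> v < b i then set (path_to (trim (a i) (b i) (B i)) v) else {}) \<subseteq> Y"
      using set_path_to_trim_subset[OF inorder_B_i, of v] bst_stepD(3)[OF block_step 2] by auto
    ultimately show ?thesis
      using top_paths[OF bst_stepD(2)[OF top_step]] by blast
  qed
qed

lemma inorder_combine_step: "inorder (combine a b (B(i := B')) T') = inorder (combine a b B T)"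
proof -
  have "inorder (combine a b (B(i := B')) T') = concat (map (\<lambda>j. [a j..<Suc (b j)]) (inorder T'))"
    using inorder_combine[of T' "B(i := B')"] inorder_B' separated_T' by blast
  moreover have "inorder T' = inorder T"
    using top_step unfolding bst_step_def by blast
  ultimately show ?thesis
    using inorder_combine[OF inorder_B separated_T] by simp
qed

lemma subtree_at_combine_untouched_block:
  assumes "j \<in> set_tree T" "j \<notin> X" "a j \<le> v" "v \<le> b j"
  shows "subtree_at (combine a b (B(i := B')) T') v = subtree_at (combine a b B T) v"
proof -
  have i_outside: "i \<notin> set_tree (subtree_at T j)"
    using in_path_to_if_in_subtree_at[OF bst_T] bst_stepD(3)[OF top_step bst_stepD(2)[OF top_step]]
      assms(2)
    by blast
  have "subtree_at (combine a b (B(i := B')) T') v =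
        subtree_at (combine a b (B(i := B')) (subtree_at T' j)) v"
    unfolding combine_def using assms set_tree_T' by (intro subtree_at_expand[OF bst_T' separated_T']) auto
  also have "subtree_at T' j = subtree_at T j"
    using bst_stepD(5)[OF top_step assms(1,2)] .
  also have "combine a b (B(i := B')) (subtree_at T j) = combine a b B (subtree_at T j)"
    unfolding combine_def using i_outside by (intro expand_cong) auto
  also have "subtree_at (combine a b B (subtree_at T j)) v = subtree_at (combine a b B T) v"
    unfolding combine_def using assms by (intro subtree_at_expand[OF bst_T separated_T, symmetric])
  finally show ?thesis .
qed

lemma subtree_at_combine_inner:
  assumes "j \<in> set_tree T" "a j < v" "v < b j" "v \<notin> Y"
  shows "subtree_at (combine a b (B(i := B')) T') v = subtree_at (combine a b B T) v"
proof -
  have "subtree_at (combine a b (B(i := B')) T') v = subtree_at (trim (a j) (b j) ((B(i := B')) j)) v"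
    unfolding combine_def using assms set_tree_T'
    by (intro subtree_at_expand_inner[OF bst_T' separated_T']) auto
  also have "\<dots> = subtree_at (trim (a j) (b j) (B j)) v"
  proof (cases "j = i")
    case True
    then have "v \<in> set_tree (B i) - Y"
      using assms set_tree_if_inorder_upt[OF inorder_B_i] by auto
    then have "subtree_at B' v = subtree_at (B i) v"
      using bst_stepD(5)[OF block_step] by blast
    with True show ?thesis
      using subtree_at_trim[OF inorder_B'_i _ assms(2,3)[unfolded True]]
        subtree_at_trim[OF inorder_B_i _ assms(2,3)[unfolded True]] assms(2,3)
      by simp
  qed simp
  also have "\<dots> = subtree_at (combine a b B T) v"
    unfolding combine_def using subtree_at_expand_inner[OF bst_T separated_T assms(1-3)] by simp
  finally show ?thesis .
qed

lemma subtree_at_combine_untouched: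
  assumes "v \<in> set_tree (combine a b B T)" "v \<notin> a ` X \<union> b ` X \<union> Y"
  shows "subtree_at (combine a b (B(i := B')) T') v = subtree_at (combine a b B T) v"
proof -
  obtain j where j: "j \<in> set_tree T" "a j \<le> v" "v \<le> b j"
    using assms(1) set_tree_combine[OF inorder_B separated_T] by auto
  show ?thesis
  proof (cases "j \<in> X")
    case False
    with j show ?thesis
      using subtree_at_combine_untouched_block by blast
  next
    case True
    with assms(2) j have "a j < v" "v < b j"
      by (auto simp: le_less)
    with j(1) assms(2) show ?thesis
      by (intro subtree_at_combine_inner) auto
  qed
qed

lemma bst_step_combine:
  "bst_step (combine a b B T) s (a ` X \<union> b ` X \<union> Y) (combine a b (B(i := B')) T')"
  unfolding bst_step_def
  using combine_touched_subset set_path_to_combine_touched inorder_combine_step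
    subtree_at_combine_untouched bst_stepD(2)[OF block_step] by blast

end

lemma card_touched_le:
  assumes "finite X" "finite Y"
  shows "card (a ` X \<union> b ` X \<union> Y) \<le> card Y + 2 * card X"
proof -
  have "card (a ` X \<union> b ` X \<union> Y) \<le> card (a ` X) + card (b ` X) + card Y"
    by (meson card_Un_le add_right_mono order_trans)
  also have "\<dots> \<le> card Y + 2 * card X"
    using card_image_le[OF assms(1), of a] card_image_le[OF assms(1), of b] by simp
  finally show ?thesis .
qed

lemma sum_fun_upd: "finite K \<Longrightarrow> j \<in> K \<Longrightarrow> sum (f(j := x)) K + f j = sum f K + x"
  by (simp add: sum.remove ac_simps)

lemma bst_run_blocks_Cons:
  assumes "separated a b K" "j \<in> K" "a j \<le> s" "s \<le> b j"
    and "\<forall>j'\<in>K. bst_run (B j') (filter (\<lambda>s. a j' \<le> s \<and> s \<le> b j') (s # S)) (d j')"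
  obtains Y B' d1 where "bst_step (B j) s Y B'" "d j = card Y + d1"
    "\<forall>j'\<in>K. bst_run ((B(j := B')) j') (filter (\<lambda>s. a j' \<le> s \<and> s \<le> b j') S) ((d(j := d1)) j')"
proof -
  have "bst_run (B j) (s # filter (\<lambda>s. a j \<le> s \<and> s \<le> b j) S) (d j)"
    using assms(5)[rule_format, OF assms(2)] assms(3,4) by simp
  then obtain Y B' d1 where block: "bst_step (B j) s Y B'"
      "bst_run B' (filter (\<lambda>s. a j \<le> s \<and> s \<le> b j) S) d1" "d j = card Y + d1"
    by (auto elim: bst_run_ConsE)
  have other_blocks: "\<not> (a j' \<le> s \<and> s \<le> b j')" if "j' \<in> K" "j' \<noteq> j" for j'
    using assms(1-4) that unfolding separated_def by (metis leD le_less_trans linorder_neqE_nat)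
  have "\<forall>j'\<in>K. bst_run ((B(j := B')) j') (filter (\<lambda>s. a j' \<le> s \<and> s \<le> b j') S) ((d(j := d1)) j')"
  proof
    fix j' assume "j' \<in> K"
    then show "bst_run ((B(j := B')) j') (filter (\<lambda>s. a j' \<le> s \<and> s \<le> b j') S) ((d(j := d1)) j')"
      using assms(5)[rule_format, of j'] block(2) other_blocks[of j'] by (cases "j' = j") auto
  qed
  with block(1,3) show ?thesis
    by (rule that)
qed

lemma bst_run_combine:
  assumes "list_all2 (\<lambda>s j. j \<in> K \<and> a j \<le> s \<and> s \<le> b j) S St"
    and "bst_run T St c" "set_tree T = K" "bst T" "separated a b K"
    and "\<forall>j\<in>K. inorder (B j) = [a j..<Suc (b j)]"
    and "\<forall>j\<in>K. bst_run (B j) (filter (\<lambda>s. a j \<le> s \<and> s \<le> b j) S) (d j)"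
  shows "\<exists>c'. bst_run (combine a b B T) S c' \<and> c' \<le> (\<Sum>j\<in>K. d j) + 2 * c"
  using assms
proof (induction arbitrary: T c B d rule: list_all2_induct)
  case Nil
  then show ?case
    by (auto elim: bst_run_NilE intro: bst_run_Nil)
next
  case (Cons s S j St)
  have j: "j \<in> K" "a j \<le> s" "s \<le> b j"
    using Cons.hyps(1) by auto
  obtain X T' c1 where top: "bst_step T j X T'" "bst_run T' St c1" "c = card X + c1"
    using Cons.prems(1) by (auto elim: bst_run_ConsE)
  obtain Y B' d1 where block: "bst_step (B j) s Y B'" "d j = card Y + d1"
    and block_runs': "\<forall>j'\<in>K. bst_run ((B(j := B')) j') (filter (\<lambda>s. a j' \<le> s \<and> s \<le> b j') S) ((d(j := d1)) j')"
    using bst_run_blocks_Cons[OF Cons.prems(4) j Cons.prems(6)] .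
  have set_tree_T': "set_tree T' = K"
    using bst_stepD(4)[OF top(1)] Cons.prems(2) by (metis set_inorder)
  have bst_T': "bst T'"
    using bst_stepD(4)[OF top(1)] Cons.prems(3) by (simp add: bst_iff_sorted_wrt_less)
  have inorder_blocks': "\<forall>j'\<in>K. inorder ((B(j := B')) j') = [a j'..<Suc (b j')]"
    using Cons.prems(5) bst_stepD(4)[OF block(1)] j(1) by (simp del: upt_Suc)
  obtain c' where c': "bst_run (combine a b (B(j := B')) T') S c'"
      "c' \<le> sum (d(j := d1)) K + 2 * c1"
    using Cons.IH[where B = "B(j := B')" and d = "d(j := d1)",
        OF top(2) set_tree_T' bst_T' Cons.prems(4) inorder_blocks' block_runs']
    by blast
  have "bst_step (combine a b B T) s (a ` X \<union> b ` X \<union> Y) (combine a b (B(j := B')) T')"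
    using bst_step_combine[where B = B, OF top(1) Cons.prems(3) _ _ block(1)] Cons.prems(2,4,5)
    by simp
  then have "bst_run (combine a b B T) (s # S) (card (a ` X \<union> b ` X \<union> Y) + c')"
    using c'(1) by (rule bst_run_Cons)
  moreover have "finite X" "finite Y"
    using finite_subset[OF bst_stepD(1)[OF top(1)]] finite_subset[OF bst_stepD(1)[OF block(1)]] by simp_all
  then have "card (a ` X \<union> b ` X \<union> Y) + c' \<le> (\<Sum>j\<in>K. d j) + 2 * c"
    using card_touched_le[of X Y a b] c'(2) top(3) block(2)
      sum_fun_upd[OF _ j(1), of d d1] Cons.prems(2) by fastforce
  ultimately show ?case
    by blast
qed

section \<open>Interval partitions\<close>

lemma block_tree_exists:
  assumes "1 \<le> lo" "lo \<le> hi"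
  shows "\<exists>B. inorder B = [lo..<Suc hi] \<and>
    bst_run B (filter (\<lambda>s. lo \<le> s \<and> s \<le> hi) S)
      (OPT (hi - lo + 1) (map (\<lambda>s. s - lo + 1) (filter (\<lambda>s. lo \<le> s \<and> s \<le> hi) S)))"
proof -
  let ?F = "filter (\<lambda>s. lo \<le> s \<and> s \<le> hi) S"
  have "\<forall>s\<in>set ?F. lo - 1 < s \<and> s \<le> lo - 1 + (hi - lo + 1)"
    using assms by auto
  then obtain B where B: "inorder B = [Suc (lo - 1)..<Suc (lo - 1 + (hi - lo + 1))]"
      "bst_run B ?F (OPT (hi - lo + 1) (map (\<lambda>s. s - (lo - 1)) ?F))"
    using OPT_attained_shift by blast
  have "inorder B = [lo..<Suc hi]"
    using B(1) assms by simp
  moreover have "map (\<lambda>s. s - (lo - 1)) ?F = map (\<lambda>s. s - lo + 1) ?F"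
    using assms(1) by auto
  ultimately show ?thesis
    using B(2) by metis
qed

context
  fixes a b :: "nat \<Rightarrow> nat" and k :: nat
  assumes consec: "\<forall>i. 1 \<le> i \<and> i < k \<longrightarrow> a (i + 1) = b i + 1"
    and nonempty: "\<forall>i. 1 \<le> i \<and> i \<le> k \<longrightarrow> a i \<le> b i"
begin

lemma separated_partition: "separated a b {1..k}"
proof -
  have "b j < a j'" if "1 \<le> j" "j < j'" "j' \<le> k" for j j'
    using that
  proof (induction j')
    case (Suc j')
    then show ?case
      using consec[rule_format, of j'] nonempty[rule_format, of j'] by (cases "j = j'") auto
  qed simp
  then show ?thesis
    using nonempty unfolding separated_def by auto
qed

lemma concat_partition:
  assumes "a 1 = 1" "1 \<le> m" "m \<le> k"
  shows "concat (map (\<lambda>j. [a j..<Suc (b j)]) [1..<Suc m]) = [1..<Suc (b m)]"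
  using assms(2,3)
proof (induction m rule: dec_induct)
  case base
  then show ?case
    using assms(1) by simp
next
  case (step n)
  then have "a (Suc n) = Suc (b n)" "a (Suc n) \<le> b (Suc n)"
    using consec nonempty by auto
  moreover have "[1..<Suc (Suc n)] = [1..<Suc n] @ [Suc n]"
    by simp
  ultimately show ?case
    using step upt_add_eq_append[of 1 "Suc (b n)" "b (Suc n) - b n"] by (simp del: upt_Suc)
qed

lemma block_trees_exist:
  assumes "a 1 = 1"
  shows "\<exists>B. \<forall>j\<in>{1..k}. inorder (B j) = [a j..<Suc (b j)] \<and>
    bst_run (B j) (filter (\<lambda>s. a j \<le> s \<and> s \<le> b j) S)
      (OPT (b j - a j + 1) (map (\<lambda>s. s - a j + 1) (filter (\<lambda>s. a j \<le> s \<and> s \<le> b j) S)))"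
proof -
  have "1 \<le> a j" if "j \<in> {1..k}" for j
  proof (cases "j = 1")
    case False
    with that have "b 1 < a j"
      using separated_partition unfolding separated_def by auto
    then show ?thesis
      by simp
  qed (use assms in simp)
  moreover have "a j \<le> b j" if "j \<in> {1..k}" for j
    using separated_partition that unfolding separated_def by blast
  ultimately have "\<forall>j\<in>{1..k}. \<exists>B. inorder B = [a j..<Suc (b j)] \<and>
    bst_run B (filter (\<lambda>s. a j \<le> s \<and> s \<le> b j) S)
      (OPT (b j - a j + 1) (map (\<lambda>s. s - a j + 1) (filter (\<lambda>s. a j \<le> s \<and> s \<le> b j) S)))"
    using block_tree_exists by blast
  then show ?thesis
    by (rule bchoice)
qed

lemma blocks_of_partition:
  assumes "concat (map (\<lambda>j. [a j..<Suc (b j)]) [1..<Suc k]) = [1..<Suc n]"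
    and "\<forall>s\<in>set S. 1 \<le> s \<and> s \<le> n" "length St = length S"
    and "\<forall>j < length S. \<forall>i. 1 \<le> i \<and> i \<le> k \<longrightarrow> (St ! j = i \<longleftrightarrow> a i \<le> S ! j \<and> S ! j \<le> b i)"
  shows "list_all2 (\<lambda>s j. j \<in> {1..k} \<and> a j \<le> s \<and> s \<le> b j) S St"
proof -
  have "St ! j \<in> {1..k} \<and> a (St ! j) \<le> S ! j \<and> S ! j \<le> b (St ! j)" if "j < length S" for j
  proof -
    have "S ! j \<in> set [1..<Suc n]"
      using assms(2)[rule_format, OF nth_mem[OF that]] by (simp del: upt_Suc)
    also have "set [1..<Suc n] = (\<Union>i\<in>{1..k}. {a i..b i})"
      unfolding assms(1)[symmetric] by (simp add: atLeastLessThanSuc_atLeastAtMost del: upt_Suc)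
    finally obtain i where i: "i \<in> {1..k}" "a i \<le> S ! j" "S ! j \<le> b i"
      by auto
    then have "St ! j = i"
      using assms(4)[rule_format, OF that, of i] by simp
    with i show ?thesis
      by simp
  qed
  with assms(3) show ?thesis
    by (simp add: list_all2_conv_all_nth)
qed

end

theorem mainTheorem10:
  fixes n k :: nat and S St :: "nat list" and a b :: "nat \<Rightarrow> nat"
  assumes S_range: "\<forall>s\<in>set S. 1 \<le> s \<and> s \<le> n"
    and k_pos: "1 \<le> k"
    and a1: "a 1 = 1" and bk: "b k = n"
    and consec: "\<forall>i. 1 \<le> i \<and> i < k \<longrightarrow> a (i + 1) = b i + 1"
    and nonempty: "\<forall>i. 1 \<le> i \<and> i \<le> k \<longrightarrow> a i \<le> b i"
    and St_len: "length St = length S"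
    and St_def: "\<forall>j < length S. \<forall>i. 1 \<le> i \<and> i \<le> k \<longrightarrow>
                    (St ! j = i \<longleftrightarrow> a i \<le> S ! j \<and> S ! j \<le> b i)"
  shows "OPT n S \<le>
           (\<Sum>i = 1..k. OPT (b i - a i + 1)
               (map (\<lambda>s. s - a i + 1) (filter (\<lambda>s. a i \<le> s \<and> s \<le> b i) S)))
           + 3 * OPT k St"
proof -
  have cover: "concat (map (\<lambda>j. [a j..<Suc (b j)]) [1..<Suc k]) = [1..<Suc n]"
    using concat_partition[OF consec nonempty a1 k_pos order_refl] bk by simp
  have blocks: "list_all2 (\<lambda>s j. j \<in> {1..k} \<and> a j \<le> s \<and> s \<le> b j) S St"
    using blocks_of_partition[OF consec nonempty cover S_range St_len St_def] .
  then have "\<forall>x\<in>set St. 1 \<le> x \<and> x \<le> k"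
    by (auto simp: list_all2_conv_all_nth in_set_conv_nth)
  then obtain T where T: "inorder T = [1..<k+1]" "bst_run T St (OPT k St)"
    using OPT_attained by blast
  have set_T: "set_tree T = {1..k}"
    using set_tree_if_inorder_upt[OF T(1)] by (simp add: atLeastLessThanSuc_atLeastAtMost)
  have bst_T: "bst T"
    using T(1) by (rule bst_if_inorder_upt)
  define cost where
    "cost j = OPT (b j - a j + 1) (map (\<lambda>s. s - a j + 1) (filter (\<lambda>s. a j \<le> s \<and> s \<le> b j) S))" for j
  obtain B where B: "\<forall>j\<in>{1..k}. inorder (B j) = [a j..<Suc (b j)] \<and>
      bst_run (B j) (filter (\<lambda>s. a j \<le> s \<and> s \<le> b j) S) (cost j)"
    using block_trees_exist[OF consec nonempty a1] unfolding cost_def by blast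
  have sep: "separated a b {1..k}"
    using consec nonempty by (rule separated_partition)
  have "inorder (combine a b B T) = [1..<n+1]"
    using inorder_combine[of T B a b] B sep set_T T(1) cover by (simp del: upt_Suc)
  moreover obtain c where "bst_run (combine a b B T) S c" "c \<le> sum cost {1..k} + 2 * OPT k St"
    using bst_run_combine[where B = B and d = cost, OF blocks T(2) set_T bst_T sep] B by auto
  ultimately show ?thesis
    using OPT_le_bst_run unfolding cost_def by fastforce
qed

end
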